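(* Consider any sequences evolved by Algorithm 1 and let $d_0:=\|x^*-x^0\|$. Then: (a) for all $k\ge1$ and $x\in\mathcal H$, $A_k[h(y^k)-h(x)]+\frac{1-\sigma^2}{2}\sum_{j=1}^k\frac{A_j}{\lambda_j}\|y^j-\tilde x^{j-1}\|^2+\sum_{j=1}^k\frac{\mu(1+\mu A_{j-1})\lambda_jA_{j-1}}{2a_j}\|x^{j-1}-y^{j-1}\|^2+\frac{1+\mu A_k}{2}\|x-x^k\|^2\le\frac12\|x-x^0\|^2$; (b) if $\sigma<1$, then for all $k\ge1$, $\sum_{j=1}^k\frac{A_j}{\lambda_j}\|y^j-\tilde x^{j-1}\|^2\le\frac{d_0^2}{1-\sigma^2}$.
   Context: Setting: $\mathcal H$ is a finite-dimensional real inner product space with inner product $\langle\cdot,\cdot\rangle$ and norm $\|\cdot\|$. $f,g:\mathcal H\to(-\infty,\infty]$ are proper, closed, convex functions, $h:=f+g$ has nonempty domain, and $g$ is $\mu$-strongly convex for some $\mu>0$, i.e. $g(tx+(1-t)y)\le tg(x)+(1-t)g(y)-\frac{\mu}{2}t(1-t)\|x-y\|^2$ for all $x,y\in\mathcal H$, $t\in[0,1]$. $x^*$ denotes the unique minimizer of $h$. For $\varepsilon\ge 0$, $\partial_\varepsilon f(y):=\{u\in\mathcal H: f(w)\ge f(y)+\langle u,w-y\rangle-\varepsilon\ \forall w\in\mathcal H\}$, and $\partial g:=\partial_0 g$. Algorithm 1: Choose $x^0,y^0\in\mathcal H$ and $\sigma\in[0,1]$, and set $A_0=0$. For $k=0,1,2,\dots$: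 choose $\lambda_{k+1}>0$, set $a_{k+1}=\frac{(1+2\mu A_k)\lambda_{k+1}+\sqrt{(1+2\mu A_k)^2\lambda_{k+1}^2+4(1+\mu A_k)A_k\lambda_{k+1}}}{2}$ and $\tilde x^k=\frac{a_{k+1}-\mu A_k\lambda_{k+1}}{A_k+a_{k+1}}x^k+\frac{A_k+\mu A_k\lambda_{k+1}}{A_k+a_{k+1}}y^k$; compute $(y^{k+1},v^{k+1},\varepsilon_{k+1})\in\mathcal H\times\mathcal H\times[0,\infty)$ such that $v^{k+1}\in\partial_{\varepsilon_{k+1}}f(y^{k+1})+\partial g(y^{k+1})$ and $\frac{\|\lambda_{k+1}v^{k+1}+y^{k+1}-\tilde x^k\|^2}{1+\lambda_{k+1}\mu}+2\lambda_{k+1}\varepsilon_{k+1}\le\sigma^2\|y^{k+1}-\tilde x^k\|^2$; then set $A_{k+1}=A_k+a_{k+1}$ and $x^{k+1}=\frac{1+\mu A_k}{1+\mu A_{k+1}}x^k+\frac{\mu a_{k+1}}{1+\mu A_{k+1}}y^{k+1}-\frac{a_{k+1}}{1+\mu A_{k+1}}v^{k+1}$. "Sequences evolved by Algorithm 1" means any sequences satisfying all these relations for every $k\ge 0$. *)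

theory Defs
  imports "HOL-Analysis.Analysis"
begin

text \<open>Extended-real-valued functions on a finite-dimensional real inner product space
  (modelled as a type of class euclidean_space), with values in (-infinity, +infinity].\<close>

definition proper_fun :: "('a \<Rightarrow> ereal) \<Rightarrow> bool" where
  "proper_fun f \<longleftrightarrow> (\<forall>x. f x \<noteq> -\<infinity>) \<and> (\<exists>x. f x \<noteq> \<infinity>)"

definition closed_fun :: "('a::topological_space \<Rightarrow> ereal) \<Rightarrow> bool" where
  "closed_fun f \<longleftrightarrow> closed {(x, r::real). f x \<le> ereal r}"

definition convex_fun :: "('a::real_vector \<Rightarrow> ereal) \<Rightarrow> bool" where
  "convex_fun f \<longleftrightarrow> (\<forall>x y t. 0 \<le> t \<and> t \<le> 1 \<longrightarrow>
     f (t *\<^sub>R x + (1 - t) *\<^sub>R y) \<le> ereal t * f x + ereal (1 - t) * f y)"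

definition strongly_convex_fun :: "real \<Rightarrow> ('a::real_normed_vector \<Rightarrow> ereal) \<Rightarrow> bool" where
  "strongly_convex_fun \<mu> g \<longleftrightarrow> (\<forall>x y t. 0 \<le> t \<and> t \<le> 1 \<longrightarrow>
     g (t *\<^sub>R x + (1 - t) *\<^sub>R y) \<le> ereal t * g x + ereal (1 - t) * g y
        - ereal (\<mu> / 2 * t * (1 - t) * (norm (x - y))\<^sup>2))"

definition eps_subdiff :: "real \<Rightarrow> ('a::real_inner \<Rightarrow> ereal) \<Rightarrow> 'a \<Rightarrow> 'a set" where
  "eps_subdiff \<epsilon> f y = {u. \<forall>w. f w \<ge> f y + ereal (inner u (w - y) - \<epsilon>)}"

definition subdiff :: "('a::real_inner \<Rightarrow> ereal) \<Rightarrow> 'a \<Rightarrow> 'a set" where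
  "subdiff f y = eps_subdiff 0 f y"

end

(*
  The functions Gamma_j(w) = h(y^j) - eps_j + <v^j, w - y^j> + mu/2 |w - y^j|^2 minorize h,
  because v^j is the sum of an eps_j-subgradient of f and a subgradient of the mu-strongly
  convex g. The potential
    A_k h(y^k) + (1 - sigma^2)/2 S1_k + S2_k + (1 + mu A_k)/2 |w - x^k|^2
  (S1, S2 the two sums of the statement) grows by at most a_(k+1) Gamma_(k+1)(w) per
  iteration: by an exact quadratic identity, which holds because a_(k+1) is a root of
  a^2 = lam ((1 + 2 mu A) a + (1 + mu A) A), its increment differs from that bound by a
  nonnegative multiple of the relative error of the inexact proximal step. Summing, the
  potential is at most A_k h(w) + |w - x^0|^2/2, which is (a); taking w = x^* gives (b).
*)
theory Submission
  imports Defs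
begin

lemma eps_subdiff_imp_finite:
  assumes "proper_fun f" and "u \<in> eps_subdiff e f y"
  shows "f y = ereal (real_of_ereal (f y))"
proof -
  obtain w where "f w \<noteq> \<infinity>" using assms(1) unfolding proper_fun_def by auto
  moreover have "f w \<ge> f y + ereal (inner u (w - y) - e)"
    using assms(2) unfolding eps_subdiff_def by auto
  ultimately have "f y \<noteq> \<infinity>" by auto
  moreover have "f y \<noteq> -\<infinity>" using assms(1) unfolding proper_fun_def by auto
  ultimately show ?thesis by (cases "f y") auto
qed

lemma eps_subdiff_ineq:
  assumes "proper_fun f" and "u \<in> eps_subdiff e f y"
  shows "ereal (real_of_ereal (f y) + inner u (w - y) - e) \<le> f w"
proof -
  have "f y + ereal (inner u (w - y) - e) \<le> f w"
    using assms(2) unfolding eps_subdiff_def by auto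
  then show ?thesis
    using eps_subdiff_imp_finite[OF assms] by (metis add_diff_eq plus_ereal.simps(1))
qed

lemma strongly_convex_subdiff_ineq:
  assumes "proper_fun g" and "strongly_convex_fun \<mu> g" and "q \<in> subdiff g y" and "\<mu> > 0"
  shows "ereal (real_of_ereal (g y) + inner q (w - y) + \<mu> / 2 * (norm (w - y))\<^sup>2) \<le> g w"
proof (cases "g w")
  case PInf
  then show ?thesis by simp
next
  case MInf
  then show ?thesis using assms(1) unfolding proper_fun_def by auto
next
  case (real gw)
  have q: "q \<in> eps_subdiff 0 g y" using assms(3) unfolding subdiff_def .
  define gy where "gy = real_of_ereal (g y)"
  define d2 where "d2 = (norm (w - y))\<^sup>2"
  define c where "c = gw - gy - inner q (w - y)"
  have gy: "g y = ereal gy" using eps_subdiff_imp_finite[OF assms(1) q] gy_def by simp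
  have lin: "ereal (gy + inner q (z - y)) \<le> g z" for z
    using eps_subdiff_ineq[OF assms(1) q, of z] gy_def by simp
  have along_segment: "\<mu> / 2 * d2 * (1 - t) \<le> c" if t: "0 < t" "t \<le> 1" for t
  proof -
    define z where "z = t *\<^sub>R w + (1 - t) *\<^sub>R y"
    have "z - y = t *\<^sub>R (w - y)" unfolding z_def by (simp add: algebra_simps)
    then have "ereal (gy + t * inner q (w - y)) \<le> g z" using lin[of z] by simp
    also have "g z \<le> ereal t * g w + ereal (1 - t) * g y - ereal (\<mu> / 2 * t * (1 - t) * d2)"
      using assms(2) t unfolding strongly_convex_fun_def z_def d2_def by auto
    also have "\<dots> = ereal (t * gw + (1 - t) * gy - \<mu> / 2 * t * (1 - t) * d2)"
      using real gy by simp
    finally have "t * (\<mu> / 2 * d2 * (1 - t)) \<le> t * c"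
      unfolding c_def by (simp add: algebra_simps)
    then show ?thesis using t by simp
  qed
  have "\<mu> / 2 * d2 \<le> c"
  proof (rule field_le_epsilon)
    fix e :: real assume e: "e > 0"
    define M where "M = \<mu> / 2 * d2"
    define t where "t = min 1 (e / (M + 1))"
    have M: "M \<ge> 0" using assms(4) unfolding M_def d2_def by simp
    have t: "0 < t" "t \<le> 1" using e M unfolding t_def by auto
    have "t * M \<le> e / (M + 1) * M" using M unfolding t_def by (intro mult_right_mono) auto
    also have "\<dots> \<le> e" using e M by (simp add: divide_le_eq)
    finally show "\<mu> / 2 * d2 \<le> c + e"
      using along_segment[OF t] unfolding M_def by (simp add: algebra_simps)
  qed
  then show ?thesis using real unfolding c_def d2_def gy_def by simp
qed

text \<open>Inverses are passed as variables so that the identity becomes an ideal-membership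
  problem for \<open>algebra\<close>.\<close>
lemma potential_identity_poly:
  fixes p q v w :: "'a::real_inner" and a A l \<mu> s ti li ai ki Bi :: real
  assumes "a\<^sup>2 = l * ((1 + 2*\<mu>*A) * a + (1 + \<mu>*A) * A)"
    and "li * l = 1" and "ai * a = 1" and "ti * (1 + \<mu>*(A+a)) = 1" and "Bi * (A+a) = 1"
    and "ki * (1 + l*\<mu>) = 1"
  shows "(1+\<mu>*A)/2 * (norm (w - p))\<^sup>2 + a * (inner v w + \<mu>/2 * (norm w)\<^sup>2)
       + A * (inner v q + \<mu>/2 * (norm q)\<^sup>2)
       - (1+\<mu>*(A+a))/2 * (norm (w - (((1+\<mu>*A)*ti) *\<^sub>R p - (a*ti) *\<^sub>R v)))\<^sup>2
       - (1-s\<^sup>2)*(A+a)*li/2 * (norm (((a-\<mu>*A*l)*Bi) *\<^sub>R p + ((A+\<mu>*A*l)*Bi) *\<^sub>R q))\<^sup>2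
       - \<mu>*(1+\<mu>*A)*l*A*ai/2 * (norm (p - q))\<^sup>2
     = (A+a)*li/2 * (s\<^sup>2 * (norm (((a-\<mu>*A*l)*Bi) *\<^sub>R p + ((A+\<mu>*A*l)*Bi) *\<^sub>R q))\<^sup>2
          - (norm (l *\<^sub>R v - (((a-\<mu>*A*l)*Bi) *\<^sub>R p + ((A+\<mu>*A*l)*Bi) *\<^sub>R q)))\<^sup>2 * ki)"
  unfolding power2_norm_eq_inner
  apply (simp add: inner_add_left inner_add_right inner_diff_left inner_diff_right inner_commute)
  using assms by algebra

lemma potential_identity:
  fixes p q v w :: "'a::real_inner" and a A l \<mu> s :: real
  assumes "a\<^sup>2 = l * ((1 + 2*\<mu>*A) * a + (1 + \<mu>*A) * A)"
    and "l > 0" and "a > 0" and "A \<ge> 0" and "\<mu> > 0"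
  shows "(1+\<mu>*A)/2 * (norm (w - p))\<^sup>2 + a * (inner v w + \<mu>/2 * (norm w)\<^sup>2)
       + A * (inner v q + \<mu>/2 * (norm q)\<^sup>2)
     = (1+\<mu>*(A+a))/2 * (norm (w - (((1+\<mu>*A)/(1+\<mu>*(A+a))) *\<^sub>R p - (a/(1+\<mu>*(A+a))) *\<^sub>R v)))\<^sup>2
       + (1-s\<^sup>2)*(A+a)/l/2 * (norm (((a-\<mu>*A*l)/(A+a)) *\<^sub>R p + ((A+\<mu>*A*l)/(A+a)) *\<^sub>R q))\<^sup>2
       + \<mu>*(1+\<mu>*A)*l*A/a/2 * (norm (p - q))\<^sup>2
       + (A+a)/l/2 * (s\<^sup>2 * (norm (((a-\<mu>*A*l)/(A+a)) *\<^sub>R p + ((A+\<mu>*A*l)/(A+a)) *\<^sub>R q))\<^sup>2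
          - (norm (l *\<^sub>R v - (((a-\<mu>*A*l)/(A+a)) *\<^sub>R p + ((A+\<mu>*A*l)/(A+a)) *\<^sub>R q)))\<^sup>2 / (1+l*\<mu>))"
proof -
  have "1 + \<mu>*(A+a) > 0" "1 + l*\<mu> > 0" "A + a > 0"
    using assms(2-5) by (simp_all add: add_pos_nonneg)
  then have "(1/l) * l = 1" "(1/a) * a = 1" "(1/(1+\<mu>*(A+a))) * (1+\<mu>*(A+a)) = 1"
    "(1/(A+a)) * (A+a) = 1" "(1/(1+l*\<mu>)) * (1+l*\<mu>) = 1"
    using assms(2,3) by auto
  from potential_identity_poly[OF assms(1) this, of w p v q s]
  show ?thesis by (simp only: times_divide_eq_right mult_1_right)
qed

lemma scaleR_affine_diff:
  fixes p q z :: "'a::real_vector"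
  assumes "\<alpha> + \<beta> = 1"
  shows "\<alpha> *\<^sub>R p + \<beta> *\<^sub>R q - z = \<alpha> *\<^sub>R (p - z) + \<beta> *\<^sub>R (q - z)"
proof -
  have "z = \<alpha> *\<^sub>R z + \<beta> *\<^sub>R z" using assms by (simp flip: scaleR_add_left)
  then show ?thesis by (simp add: algebra_simps)
qed

locale accelerated_hpe =
  fixes f g :: "'a::real_inner \<Rightarrow> ereal"
    and \<mu> \<sigma> :: real
    and x y xt v :: "nat \<Rightarrow> 'a"
    and lam a A eps :: "nat \<Rightarrow> real"
  assumes f_proper: "proper_fun f" and g_proper: "proper_fun g"
    and mu_pos: "\<mu> > 0" and g_strongly_convex: "strongly_convex_fun \<mu> g"
    and A_0: "A 0 = 0"
    and lam_pos: "lam (Suc k) > 0"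
    and a_Suc: "a (Suc k) =
      ((1 + 2 * \<mu> * A k) * lam (Suc k)
        + sqrt ((1 + 2 * \<mu> * A k)\<^sup>2 * (lam (Suc k))\<^sup>2 + 4 * (1 + \<mu> * A k) * A k * lam (Suc k))) / 2"
    and xt_eq: "xt k =
      ((a (Suc k) - \<mu> * A k * lam (Suc k)) / (A k + a (Suc k))) *\<^sub>R x k
      + ((A k + \<mu> * A k * lam (Suc k)) / (A k + a (Suc k))) *\<^sub>R y k"
    and v_mem: "v (Suc k) \<in> {p + q | p q. p \<in> eps_subdiff (eps (Suc k)) f (y (Suc k))
                                           \<and> q \<in> subdiff g (y (Suc k))}"
    and error_criterion: "(norm (lam (Suc k) *\<^sub>R v (Suc k) + y (Suc k) - xt k))\<^sup>2 / (1 + lam (Suc k) * \<mu>)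
                 + 2 * lam (Suc k) * eps (Suc k) \<le> \<sigma>\<^sup>2 * (norm (y (Suc k) - xt k))\<^sup>2"
    and A_Suc: "A (Suc k) = A k + a (Suc k)"
    and x_Suc: "x (Suc k) =
      ((1 + \<mu> * A k) / (1 + \<mu> * A (Suc k))) *\<^sub>R x k
      + ((\<mu> * a (Suc k)) / (1 + \<mu> * A (Suc k))) *\<^sub>R y (Suc k)
      - (a (Suc k) / (1 + \<mu> * A (Suc k))) *\<^sub>R v (Suc k)"
begin

lemma a_pos_if_A_nonneg:
  assumes "A k \<ge> 0"
  shows "a (Suc k) > 0"
proof -
  have "(1 + 2 * \<mu> * A k) * lam (Suc k) > 0"
    using assms mu_pos lam_pos[of k] by (simp add: add_pos_nonneg)
  moreover have "sqrt ((1 + 2 * \<mu> * A k)\<^sup>2 * (lam (Suc k))\<^sup>2 + 4 * (1 + \<mu> * A k) * A k * lam (Suc k)) \<ge> 0"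
    using assms mu_pos lam_pos[of k] by simp
  ultimately show ?thesis unfolding a_Suc[of k] by (intro half_gt_zero add_pos_nonneg)
qed

lemma A_nonneg: "A k \<ge> 0"
proof (induction k)
  case 0
  then show ?case using A_0 by simp
next
  case (Suc k)
  then show ?case using a_pos_if_A_nonneg[OF Suc] A_Suc[of k] by linarith
qed

lemma a_pos: "a (Suc k) > 0"
  using a_pos_if_A_nonneg[OF A_nonneg] .

lemma A_pos: "k \<ge> 1 \<Longrightarrow> A k > 0"
  using A_Suc A_nonneg a_pos by (cases k) (auto simp: add_nonneg_pos)

lemma A_eq_sum: "A k = (\<Sum>j=1..k. a j)"
  by (induction k) (simp_all add: A_0 A_Suc)

lemma a_Suc_quadratic:
  "(a (Suc k))\<^sup>2 = lam (Suc k) * ((1 + 2 * \<mu> * A k) * a (Suc k) + (1 + \<mu> * A k) * A k)"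
proof -
  define B where "B = (1 + 2 * \<mu> * A k) * lam (Suc k)"
  define C where "C = (1 + \<mu> * A k) * A k * lam (Suc k)"
  have "C \<ge> 0"
    unfolding C_def using A_nonneg[of k] mu_pos lam_pos[of k] by simp
  have "a (Suc k) = (B + sqrt (B\<^sup>2 + 4 * C)) / 2"
    unfolding a_Suc[of k] B_def C_def by (simp add: power_mult_distrib mult.assoc)
  then have "2 * a (Suc k) - B = sqrt (B\<^sup>2 + 4 * C)" by simp
  then have "(2 * a (Suc k) - B)\<^sup>2 = B\<^sup>2 + 4 * C"
    using \<open>C \<ge> 0\<close> by simp
  then have "(a (Suc k))\<^sup>2 = a (Suc k) * B + C" by algebra
  then show ?thesis unfolding B_def C_def by (simp add: algebra_simps)
qed

lemma x_Suc_minus_y_Suc: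
  "x (Suc k) - y (Suc k) =
     ((1 + \<mu> * A k) / (1 + \<mu> * (A k + a (Suc k)))) *\<^sub>R (x k - y (Suc k))
     - (a (Suc k) / (1 + \<mu> * (A k + a (Suc k)))) *\<^sub>R v (Suc k)"
proof -
  have "1 + \<mu> * (A k + a (Suc k)) > 0"
    using mu_pos A_nonneg[of k] a_pos[of k] by (simp add: add_pos_nonneg)
  then have "(1 + \<mu> * A k) / (1 + \<mu> * (A k + a (Suc k))) + \<mu> * a (Suc k) / (1 + \<mu> * (A k + a (Suc k))) = 1"
    unfolding add_divide_distrib[symmetric] by (simp add: algebra_simps)
  from scaleR_affine_diff[OF this, of "x k" "y (Suc k)" "y (Suc k)"] show ?thesis
    unfolding x_Suc[of k] A_Suc[of k] by (simp add: algebra_simps)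
qed

lemma xt_minus_y_Suc:
  "xt k - y (Suc k) =
     ((a (Suc k) - \<mu> * A k * lam (Suc k)) / (A k + a (Suc k))) *\<^sub>R (x k - y (Suc k))
     + ((A k + \<mu> * A k * lam (Suc k)) / (A k + a (Suc k))) *\<^sub>R (y k - y (Suc k))"
proof -
  have "A k + a (Suc k) > 0" using A_nonneg[of k] a_pos[of k] by simp
  then have "(a (Suc k) - \<mu> * A k * lam (Suc k)) / (A k + a (Suc k))
      + (A k + \<mu> * A k * lam (Suc k)) / (A k + a (Suc k)) = 1"
    unfolding add_divide_distrib[symmetric] by (simp add: algebra_simps)
  from scaleR_affine_diff[OF this] show ?thesis unfolding xt_eq[of k] .
qed

definition h_y :: "nat \<Rightarrow> real" where
  "h_y j = real_of_ereal (f (y j)) + real_of_ereal (g (y j))"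

definition lower_model :: "nat \<Rightarrow> 'a \<Rightarrow> real" where
  "lower_model j w = h_y j - eps j + inner (v j) (w - y j) + \<mu> / 2 * (norm (w - y j))\<^sup>2"

lemma h_y_Suc: "f (y (Suc k)) + g (y (Suc k)) = ereal (h_y (Suc k))"
proof -
  obtain p q where p: "p \<in> eps_subdiff (eps (Suc k)) f (y (Suc k))"
    and q: "q \<in> eps_subdiff 0 g (y (Suc k))"
    using v_mem[of k] unfolding subdiff_def by blast
  show ?thesis unfolding h_y_def
    by (subst eps_subdiff_imp_finite[OF f_proper p], subst eps_subdiff_imp_finite[OF g_proper q]) simp
qed

lemma lower_model_le: "ereal (lower_model (Suc k) w) \<le> f w + g w"
proof -
  obtain p q where v: "v (Suc k) = p + q"
    and p: "p \<in> eps_subdiff (eps (Suc k)) f (y (Suc k))" and q: "q \<in> subdiff g (y (Suc k))"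
    using v_mem[of k] by blast
  have "ereal (lower_model (Suc k) w)
      = ereal (real_of_ereal (f (y (Suc k))) + inner p (w - y (Suc k)) - eps (Suc k))
        + ereal (real_of_ereal (g (y (Suc k))) + inner q (w - y (Suc k)) + \<mu> / 2 * (norm (w - y (Suc k)))\<^sup>2)"
    unfolding lower_model_def h_y_def v by (simp add: inner_add_left)
  also have "\<dots> \<le> f w + g w"
    using eps_subdiff_ineq[OF f_proper p] strongly_convex_subdiff_ineq[OF g_proper g_strongly_convex q mu_pos]
    by (rule add_mono)
  finally show ?thesis .
qed

definition residual_sum :: "nat \<Rightarrow> real" where
  "residual_sum k = (\<Sum>j=1..k. A j / lam j * (norm (y j - xt (j - 1)))\<^sup>2)"

definition gap_sum :: "nat \<Rightarrow> real" where
  "gap_sum k = (\<Sum>j=1..k. \<mu> * (1 + \<mu> * A (j - 1)) * lam j * A (j - 1) / (2 * a j)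
                           * (norm (x (j - 1) - y (j - 1)))\<^sup>2)"

definition potential :: "nat \<Rightarrow> 'a \<Rightarrow> real" where
  "potential k w = A k * h_y k + (1 - \<sigma>\<^sup>2) / 2 * residual_sum k + gap_sum k
     + (1 + \<mu> * A k) / 2 * (norm (w - x k))\<^sup>2"

lemma lower_model_at_previous: "A k * lower_model (Suc k) (y k) \<le> A k * h_y k"
proof (cases k)
  case 0
  then show ?thesis using A_0 by simp
next
  case (Suc k')
  have "ereal (lower_model (Suc k) (y k)) \<le> ereal (h_y k)"
    using lower_model_le[of k "y k"] h_y_Suc[of k'] Suc by simp
  then show ?thesis using A_nonneg[of k] by (simp add: mult_left_mono)
qed

lemma error_slack:
  "(A k + a (Suc k)) * eps (Suc k)
   \<le> (A k + a (Suc k)) / lam (Suc k) / 2 * (\<sigma>\<^sup>2 * (norm (y (Suc k) - xt k))\<^sup>2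
        - (norm (lam (Suc k) *\<^sub>R v (Suc k) + y (Suc k) - xt k))\<^sup>2 / (1 + lam (Suc k) * \<mu>))"
  (is "_ \<le> ?rhs")
proof -
  have "(A k + a (Suc k)) * eps (Suc k) = (A k + a (Suc k)) / lam (Suc k) / 2 * (2 * lam (Suc k) * eps (Suc k))"
    using lam_pos[of k] by simp
  also have "\<dots> \<le> ?rhs"
    using error_criterion[of k] A_nonneg[of k] a_pos[of k] lam_pos[of k]
    by (intro mult_left_mono) auto
  finally show ?thesis .
qed

lemma potential_Suc_le: "potential (Suc k) w \<le> potential k w + a (Suc k) * lower_model (Suc k) w"
proof -
  let ?ty = "y (Suc k)" and ?l = "lam (Suc k)" and ?a1 = "a (Suc k)" and ?vv = "v (Suc k)"
  note identity = potential_identity[OF a_Suc_quadratic[of k] lam_pos[of k] a_pos[of k] A_nonneg[of k] mu_pos,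
      where w = "w - ?ty" and p = "x k - ?ty" and v = ?vv and q = "y k - ?ty" and s = \<sigma>]
  have "w - ?ty - (x k - ?ty) = w - x k"
    and "w - ?ty - (((1 + \<mu> * A k) / (1 + \<mu> * (A k + ?a1))) *\<^sub>R (x k - ?ty)
           - (?a1 / (1 + \<mu> * (A k + ?a1))) *\<^sub>R ?vv) = w - x (Suc k)"
    and "x k - ?ty - (y k - ?ty) = x k - y k"
    and "?l *\<^sub>R ?vv - (xt k - ?ty) = ?l *\<^sub>R ?vv + ?ty - xt k"
    and "norm (xt k - ?ty) = norm (?ty - xt k)"
    by (simp_all add: x_Suc_minus_y_Suc[symmetric] norm_minus_commute)
  note identity = identity[unfolded xt_minus_y_Suc[of k, symmetric] this]
  have model_combination: "A k * lower_model (Suc k) (y k) + ?a1 * lower_model (Suc k) w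
      = (A k + ?a1) * (h_y (Suc k) - eps (Suc k))
        + ?a1 * (inner ?vv (w - ?ty) + \<mu> / 2 * (norm (w - ?ty))\<^sup>2)
        + A k * (inner ?vv (y k - ?ty) + \<mu> / 2 * (norm (y k - ?ty))\<^sup>2)"
    unfolding lower_model_def by (simp add: algebra_simps)
  have "potential (Suc k) w = (A k + ?a1) * (h_y (Suc k) - eps (Suc k)) + (A k + ?a1) * eps (Suc k)
      + (1 - \<sigma>\<^sup>2) / 2 * residual_sum k + gap_sum k
      + (1 + \<mu> * (A k + ?a1)) / 2 * (norm (w - x (Suc k)))\<^sup>2
      + (1 - \<sigma>\<^sup>2) * (A k + ?a1) / ?l / 2 * (norm (?ty - xt k))\<^sup>2
      + \<mu> * (1 + \<mu> * A k) * ?l * A k / ?a1 / 2 * (norm (x k - y k))\<^sup>2"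
    unfolding potential_def residual_sum_def gap_sum_def A_Suc[of k]
    by (simp add: algebra_simps add_divide_distrib diff_divide_distrib A_Suc)
  also have "\<dots> \<le> (A k + ?a1) * (h_y (Suc k) - eps (Suc k)) + (1 - \<sigma>\<^sup>2) / 2 * residual_sum k + gap_sum k
      + (1 + \<mu> * A k) / 2 * (norm (w - x k))\<^sup>2
      + ?a1 * (inner ?vv (w - ?ty) + \<mu> / 2 * (norm (w - ?ty))\<^sup>2)
      + A k * (inner ?vv (y k - ?ty) + \<mu> / 2 * (norm (y k - ?ty))\<^sup>2)"
    using identity error_slack[of k] by linarith
  also have "\<dots> = A k * lower_model (Suc k) (y k) + ?a1 * lower_model (Suc k) w
      + (1 - \<sigma>\<^sup>2) / 2 * residual_sum k + gap_sum k + (1 + \<mu> * A k) / 2 * (norm (w - x k))\<^sup>2"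
    using model_combination by linarith
  also have "\<dots> \<le> potential k w + ?a1 * lower_model (Suc k) w"
    unfolding potential_def using lower_model_at_previous[of k] by linarith
  finally show ?thesis .
qed

lemma potential_le_models:
  "potential k w \<le> (\<Sum>j=1..k. a j * lower_model j w) + (norm (w - x 0))\<^sup>2 / 2"
proof (induction k)
  case 0
  then show ?case by (simp add: potential_def residual_sum_def gap_sum_def A_0)
next
  case (Suc k)
  then show ?case using potential_Suc_le[of k w] by simp
qed

lemma potential_le_value:
  assumes "f w + g w = ereal r"
  shows "potential k w \<le> A k * r + (norm (w - x 0))\<^sup>2 / 2"
proof -
  have "(\<Sum>j=1..k. a j * lower_model j w) \<le> (\<Sum>j=1..k. a j * r)"
  proof (rule sum_mono)
    fix j assume "j \<in> {1..k}"
    then obtain i where j: "j = Suc i" by (cases j) auto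
    have "ereal (lower_model j w) \<le> ereal r" using lower_model_le[of i w] assms j by simp
    then show "a j * lower_model j w \<le> a j * r" using a_pos[of i] j by (simp add: mult_left_mono)
  qed
  also have "\<dots> = A k * r" by (simp add: A_eq_sum sum_distrib_right)
  finally show ?thesis using potential_le_models[of k w] by simp
qed

lemma h_y_eq: "k \<ge> 1 \<Longrightarrow> f (y k) + g (y k) = ereal (h_y k)"
  using h_y_Suc by (cases k) auto

lemma h_not_MInf: "f w + g w \<noteq> -\<infinity>"
  using f_proper g_proper unfolding proper_fun_def by (cases "f w"; cases "g w") auto

lemma gap_sum_nonneg: "gap_sum k \<ge> 0"
  unfolding gap_sum_def
proof (rule sum_nonneg)
  fix j assume "j \<in> {1..k}"
  then obtain i where j: "j = Suc i" by (cases j) auto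
  show "0 \<le> \<mu> * (1 + \<mu> * A (j - 1)) * lam j * A (j - 1) / (2 * a j) * (norm (x (j - 1) - y (j - 1)))\<^sup>2"
    using mu_pos lam_pos[of i] a_pos[of i] A_nonneg[of i] j by simp
qed

theorem potential_estimate:
  assumes "k \<ge> 1"
  shows "ereal (A k) * ((f (y k) + g (y k)) - (f z + g z))
           + ereal ((1 - \<sigma>\<^sup>2) / 2 * residual_sum k + gap_sum k + (1 + \<mu> * A k) / 2 * (norm (z - x k))\<^sup>2)
         \<le> ereal ((norm (z - x 0))\<^sup>2 / 2)"
proof (cases "f z + g z")
  case PInf
  have "ereal (A k) * ((f (y k) + g (y k)) - (f z + g z)) = -\<infinity>"
    unfolding PInf h_y_eq[OF assms] using A_pos[OF assms] by simp
  then show ?thesis by (simp only:) simp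
next
  case MInf
  with h_not_MInf[of z] show ?thesis by contradiction
next
  case (real r)
  then show ?thesis
    using h_y_eq[OF assms] potential_le_value[OF real, of k]
    by (simp add: potential_def right_diff_distrib)
qed

theorem residual_sum_bound:
  assumes xstar: "\<forall>z. f xstar + g xstar \<le> f z + g z" and "\<exists>z. f z + g z < \<infinity>"
    and "0 \<le> \<sigma>" "\<sigma> < 1" and k: "k \<ge> 1"
  shows "residual_sum k \<le> (norm (xstar - x 0))\<^sup>2 / (1 - \<sigma>\<^sup>2)"
proof -
  have "f xstar + g xstar \<noteq> \<infinity>"
    using assms(2) xstar by (metis ereal_infty_less(1) order_le_less_trans)
  then obtain r where r: "f xstar + g xstar = ereal r"
    using h_not_MInf by (cases "f xstar + g xstar") auto
  have "r \<le> h_y k" using xstar h_y_eq[OF k] r by (metis ereal_less_eq(3))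
  then have "A k * r \<le> A k * h_y k" using A_nonneg[of k] by (simp add: mult_left_mono)
  moreover have "0 \<le> (1 + \<mu> * A k) / 2 * (norm (xstar - x k))\<^sup>2"
    using mu_pos A_nonneg[of k] by simp
  ultimately have "(1 - \<sigma>\<^sup>2) * residual_sum k \<le> (norm (xstar - x 0))\<^sup>2"
    using potential_le_value[OF r, of k] gap_sum_nonneg[of k] unfolding potential_def by linarith
  moreover have "1 - \<sigma>\<^sup>2 > 0" using assms(3,4) by (simp add: power_less_one_iff)
  ultimately show ?thesis by (simp add: pos_le_divide_eq mult.commute)
qed

end

theorem proposition2p4:
  fixes f g :: "'a::euclidean_space \<Rightarrow> ereal"
    and \<mu> \<sigma> :: real
    and xstar :: 'a
    and x y xt v :: "nat \<Rightarrow> 'a"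
    and lam a A eps :: "nat \<Rightarrow> real"
  assumes f: "proper_fun f" "closed_fun f" "convex_fun f"
    and g: "proper_fun g" "closed_fun g" "convex_fun g"
    and mu: "\<mu> > 0" and gsc: "strongly_convex_fun \<mu> g"
    and hdom: "\<exists>z. f z + g z < \<infinity>"
    and xstar: "\<forall>z. f xstar + g xstar \<le> f z + g z"
    and sigma: "0 \<le> \<sigma>" "\<sigma> \<le> 1"
    and A0: "A 0 = 0"
    and lam: "\<forall>k. lam (Suc k) > 0"
    and a: "\<forall>k. a (Suc k) =
      ((1 + 2 * \<mu> * A k) * lam (Suc k)
        + sqrt ((1 + 2 * \<mu> * A k)\<^sup>2 * (lam (Suc k))\<^sup>2 + 4 * (1 + \<mu> * A k) * A k * lam (Suc k))) / 2"
    and xt: "\<forall>k. xt k =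
      ((a (Suc k) - \<mu> * A k * lam (Suc k)) / (A k + a (Suc k))) *\<^sub>R x k
      + ((A k + \<mu> * A k * lam (Suc k)) / (A k + a (Suc k))) *\<^sub>R y k"
    and eps: "\<forall>k. eps (Suc k) \<ge> 0"
    and incl: "\<forall>k. v (Suc k) \<in> {p + q | p q. p \<in> eps_subdiff (eps (Suc k)) f (y (Suc k))
                                             \<and> q \<in> subdiff g (y (Suc k))}"
    and err: "\<forall>k. (norm (lam (Suc k) *\<^sub>R v (Suc k) + y (Suc k) - xt k))\<^sup>2 / (1 + lam (Suc k) * \<mu>)
                 + 2 * lam (Suc k) * eps (Suc k) \<le> \<sigma>\<^sup>2 * (norm (y (Suc k) - xt k))\<^sup>2"
    and Asuc: "\<forall>k. A (Suc k) = A k + a (Suc k)"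
    and xsuc: "\<forall>k. x (Suc k) =
      ((1 + \<mu> * A k) / (1 + \<mu> * A (Suc k))) *\<^sub>R x k
      + ((\<mu> * a (Suc k)) / (1 + \<mu> * A (Suc k))) *\<^sub>R y (Suc k)
      - (a (Suc k) / (1 + \<mu> * A (Suc k))) *\<^sub>R v (Suc k)"
  shows "(\<forall>k\<ge>1. \<forall>z.
           ereal (A k) * ((f (y k) + g (y k)) - (f z + g z))
           + ereal ((1 - \<sigma>\<^sup>2) / 2 * (\<Sum>j=1..k. A j / lam j * (norm (y j - xt (j - 1)))\<^sup>2)
             + (\<Sum>j=1..k. \<mu> * (1 + \<mu> * A (j - 1)) * lam j * A (j - 1) / (2 * a j)
                           * (norm (x (j - 1) - y (j - 1)))\<^sup>2)
             + (1 + \<mu> * A k) / 2 * (norm (z - x k))\<^sup>2)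
           \<le> ereal ((norm (z - x 0))\<^sup>2 / 2))
       \<and> (\<sigma> < 1 \<longrightarrow> (\<forall>k\<ge>1. (\<Sum>j=1..k. A j / lam j * (norm (y j - xt (j - 1)))\<^sup>2)
                             \<le> (norm (xstar - x 0))\<^sup>2 / (1 - \<sigma>\<^sup>2)))"
proof -
  interpret accelerated_hpe f g \<mu> \<sigma> x y xt v lam a A eps
    using f(1) g(1) mu gsc A0 lam a xt incl err Asuc xsuc by unfold_locales auto
  show ?thesis
    using potential_estimate residual_sum_bound[OF xstar hdom sigma(1)]
    unfolding residual_sum_def gap_sum_def by blast
qed

end
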